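(* Let $G:\mathcal P(\mathbb T^d)\to\mathbb R$ be strongly differentiable at $\tilde\mu\in\mathcal P(\mathbb T^d)$ and define $\bar G:\mathcal P_2(\mathbb R^d)\to\mathbb R$ by $\bar G(\mu)=G(\pi_\sharp\mu)$. Then $\bar G$ is strongly differentiable at every $\mu\in\mathcal P_2(\mathbb R^d)$ with $\pi_\sharp\mu=\tilde\mu$. Conversely, if $\bar G:\mathcal P_2(\mathbb R^d)\to\mathbb R$ is of the form $\bar G(\mu)=G(\pi_\sharp\mu)$ for some $G:\mathcal P(\mathbb T^d)\to\mathbb R$ and $\bar G$ is strongly differentiable at $\mu$, then $G$ is strongly differentiable at $\tilde\mu=\pi_\sharp\mu$.
   Context: $\mathbb T^d=\mathbb R^d/\mathbb Z^d$, $\pi:\mathbb R^d\to\mathbb T^d$ the projection. $\mathcal P(\mathbb T^d)$: Borel probability measures on $\mathbb T^d$; $\mathcal P_2(\mathbb R^d)$: Borel probability measures on $\mathbb R^d$ with finite second moment. Let $\alpha(x,v)=x+v$ (on $\mathbb T^d\times\mathbb R^d\to\mathbb T^d$, resp. $\mathbb R^d\times\mathbb R^d\to\mathbb R^d$). For $\tilde\mu,\tilde\nu\in\mathcal P(\mathbb T^d)$, $\Psi(\tilde\mu,\tilde\nu)$ is the set of probability measures $\gamma$ on $\mathbb T^d\times\mathbb R^d$ with finite second moment in $v$, first marginal $\tilde\mu$ and $\alpha_\sharp\gamma=\tilde\nu$; analogously $\Psi(\mu,\nu)$ for $\mu,\nu\in\mathcal P_2(\mathbb R^d)$ (measures on $\mathbb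 R^d\times\mathbb R^d$). A function $G$ on $\mathcal P(\mathbb T^d)$ (resp. $\mathcal P_2(\mathbb R^d)$) is strongly differentiable at $\mu$ if there are $\xi\in L^2_\mu(\cdot,\mathbb R^d)$ and $k>0$ such that $\big|G(\nu)-G(\mu)-\int\langle\xi(x),v\rangle\,d\gamma(x,v)\big|\le k\int|v|^2\,d\gamma(x,v)$ for all $\nu$ and all $\gamma\in\Psi(\mu,\nu)$. *)

theory Defs
  imports "HOL-Probability.Probability"
begin

text \<open>Model of the torus: T^d is identified with the fundamental domain [0,1)^d in R^d
  (= real^'n); the projection pi reduces each coordinate mod 1.  Borel probability
  measures on T^d are Borel probability measures on R^d concentrated on [0,1)^d.\<close>

definition tor_proj :: "real^'n \<Rightarrow> real^'n" where
  "tor_proj x = (\<chi> i. frac (x $ i))"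

definition tor_dom :: "(real^'n) set" where
  "tor_dom = {x. \<forall>i. 0 \<le> x $ i \<and> x $ i < 1}"

definition tor_prob :: "(real^'n) measure \<Rightarrow> bool" where
  "tor_prob M \<longleftrightarrow> prob_space M \<and> sets M = sets borel \<and> emeasure M tor_dom = 1"

definition P2 :: "(real^'n) measure \<Rightarrow> bool" where
  "P2 M \<longleftrightarrow> prob_space M \<and> sets M = sets borel \<and> integrable M (\<lambda>x. norm x ^ 2)"

text \<open>Psi on the torus: alpha(x,v) = x + v on T^d, i.e. tor_proj (x + v).\<close>
definition Psi_tor :: "(real^'n) measure \<Rightarrow> (real^'n) measure \<Rightarrow> ((real^'n) \<times> (real^'n)) measure set" where
  "Psi_tor \<mu> \<nu> = {\<gamma>. prob_space \<gamma> \<and> sets \<gamma> = sets borel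
      \<and> integrable \<gamma> (\<lambda>(x,v). norm v ^ 2)
      \<and> distr \<gamma> borel fst = \<mu>
      \<and> distr \<gamma> borel (\<lambda>(x,v). tor_proj (x + v)) = \<nu>}"

definition Psi_R :: "(real^'n) measure \<Rightarrow> (real^'n) measure \<Rightarrow> ((real^'n) \<times> (real^'n)) measure set" where
  "Psi_R \<mu> \<nu> = {\<gamma>. prob_space \<gamma> \<and> sets \<gamma> = sets borel
      \<and> integrable \<gamma> (\<lambda>(x,v). norm v ^ 2)
      \<and> distr \<gamma> borel fst = \<mu>
      \<and> distr \<gamma> borel (\<lambda>(x,v). x + v) = \<nu>}"

definition strongly_diff_tor :: "((real^'n) measure \<Rightarrow> real) \<Rightarrow> (real^'n) measure \<Rightarrow> bool" where
  "strongly_diff_tor G \<mu> \<longleftrightarrow> tor_prob \<mu> \<and>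
     (\<exists>\<xi> k. \<xi> \<in> borel_measurable borel \<and> integrable \<mu> (\<lambda>x. norm (\<xi> x) ^ 2) \<and> k > 0 \<and>
        (\<forall>\<nu> \<gamma>. tor_prob \<nu> \<longrightarrow> \<gamma> \<in> Psi_tor \<mu> \<nu> \<longrightarrow>
           \<bar>G \<nu> - G \<mu> - (\<integral>(x,v). \<xi> x \<bullet> v \<partial>\<gamma>)\<bar> \<le> k * (\<integral>(x,v). norm v ^ 2 \<partial>\<gamma>)))"

definition strongly_diff_R :: "((real^'n) measure \<Rightarrow> real) \<Rightarrow> (real^'n) measure \<Rightarrow> bool" where
  "strongly_diff_R G \<mu> \<longleftrightarrow> P2 \<mu> \<and>
     (\<exists>\<xi> k. \<xi> \<in> borel_measurable borel \<and> integrable \<mu> (\<lambda>x. norm (\<xi> x) ^ 2) \<and> k > 0 \<and>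
        (\<forall>\<nu> \<gamma>. P2 \<nu> \<longrightarrow> \<gamma> \<in> Psi_R \<mu> \<nu> \<longrightarrow>
           \<bar>G \<nu> - G \<mu> - (\<integral>(x,v). \<xi> x \<bullet> v \<partial>\<gamma>)\<bar> \<le> k * (\<integral>(x,v). norm v ^ 2 \<partial>\<gamma>)))"

end

theory Submission
  imports Defs
begin

(* Pulling back: projecting a coupling of mu and nu on R^d along pi gives a coupling of pi#mu and
  pi#nu with the same displacements v, so the estimate for G at pi#mu with gradient xi is the
  estimate for m |-> G (pi#m) at mu with gradient xi o pi.

  Pushing forward: split mu over the unit lattice cells. The densities w_z of pi#(mu restricted to
  cell z) with respect to pi#mu sum to 1; w_z(y) is the conditional probability that x lies in cell z
  given pi x = y. A coupling of pi#mu on the torus is lifted to R^d by moving the mass at (y, v) to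
  (y + z, v) with weight w_z(y). The lift has first marginal mu and the same displacement law, its
  target projects to the torus target, and pairing xi with v becomes pairing the conditional
  expectation sum_z w_z(y) xi(y + z) with v; Jensen's inequality keeps the latter square
  integrable. *)

lemma borel_measurable_vec_componentwise:
  fixes f :: "'a \<Rightarrow> real^'n"
  assumes "\<And>i. (\<lambda>x. f x $ i) \<in> borel_measurable M"
  shows "f \<in> borel_measurable M"
proof (subst borel_measurable_euclidean_space, intro ballI)
  fix b :: "real^'n" assume "b \<in> Basis"
  then obtain i u where "b = axis i u" "u \<in> Basis" by (auto simp: Basis_vec_def)
  then show "(\<lambda>x. f x \<bullet> b) \<in> borel_measurable M" using assms[of i] by (simp add: inner_axis)
qed

lemma borel_measurable_nn_integral_count_space:
  fixes f :: "'z::countable \<Rightarrow> 'a \<Rightarrow> ennreal"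
  assumes "\<And>z. f z \<in> borel_measurable M"
  shows "(\<lambda>y. \<integral>\<^sup>+z. f z y \<partial>count_space UNIV) \<in> borel_measurable M"
proof -
  have "(\<lambda>(y,z). f z y) \<in> borel_measurable (M \<Otimes>\<^sub>M count_space UNIV)"
    by (subst measurable_pair_swap_iff)
      (rule measurable_pair_measure_countable1, auto simp: assms)
  from sigma_finite_measure.borel_measurable_nn_integral
    [OF sigma_finite_measure_count_space_countable[OF countableI_type] this]
  show ?thesis by simp
qed

lemma borel_measurable_integral_count_space:
  fixes f :: "'z::countable \<Rightarrow> 'a \<Rightarrow> 'b::{banach, second_countable_topology}"
  assumes "\<And>z. f z \<in> borel_measurable M"
  shows "(\<lambda>y. \<integral>z. f z y \<partial>count_space UNIV) \<in> borel_measurable M"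
proof -
  have "(\<lambda>(y,z). f z y) \<in> borel_measurable (M \<Otimes>\<^sub>M count_space UNIV)"
    by (subst measurable_pair_swap_iff)
      (rule measurable_pair_measure_countable1, auto simp: assms)
  from sigma_finite_measure.borel_measurable_lebesgue_integral
    [OF sigma_finite_measure_count_space_countable[OF countableI_type] this]
  show ?thesis by simp
qed

lemma nn_integral_weighted_square_le:
  assumes [measurable]: "w \<in> borel_measurable N" "a \<in> borel_measurable N"
    and "(\<integral>\<^sup>+z. w z \<partial>N) = 1"
  shows "(\<integral>\<^sup>+z. w z * a z \<partial>N)\<^sup>2 \<le> (\<integral>\<^sup>+z. w z * a z ^ 2 \<partial>N)"
proof -
  have "(\<integral>\<^sup>+z. w z * a z \<partial>N)\<^sup>2 = (\<integral>\<^sup>+z. 1 * a z \<partial>density N w)\<^sup>2"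
    by (simp add: nn_integral_density)
  also have "\<dots> \<le> (\<integral>\<^sup>+z. 1 ^ 2 \<partial>density N w) * (\<integral>\<^sup>+z. a z ^ 2 \<partial>density N w)"
    by (rule Cauchy_Schwarz_nn_integral) simp_all
  also have "(\<integral>\<^sup>+z. 1 ^ 2 \<partial>density N w) = 1"
    using assms(3) by (subst nn_integral_density) simp_all
  finally show ?thesis by (simp add: nn_integral_density)
qed

lemma emeasure_distr_eq_nn_integral:
  assumes "f \<in> M \<rightarrow>\<^sub>M N" and "A \<in> sets N"
  shows "emeasure (distr M N f) A = (\<integral>\<^sup>+x. indicator A (f x) \<partial>M)"
proof -
  have "emeasure (distr M N f) A = (\<integral>\<^sup>+y. indicator A y \<partial>distr M N f)" using assms(2) by simp
  also have "\<dots> = (\<integral>\<^sup>+x. indicator A (f x) \<partial>M)" by (rule nn_integral_distr) (use assms in simp_all)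
  finally show ?thesis .
qed

lemma norm_add_power2_le: "norm (x + y) ^ 2 \<le> 2 * norm x ^ 2 + 2 * norm (y :: 'a::real_normed_vector) ^ 2"
proof -
  have "norm (x + y) ^ 2 \<le> (norm x + norm y) ^ 2"
    by (intro power_mono norm_triangle_ineq) simp
  also have "\<dots> \<le> 2 * norm x ^ 2 + 2 * norm y ^ 2"
    using zero_le_power2[of "norm x - norm y"] by (simp add: power2_sum power2_diff)
  finally show ?thesis .
qed

lemma abs_inner_le_power2: "\<bar>x \<bullet> y\<bar> \<le> norm x ^ 2 + norm (y :: 'a::real_inner) ^ 2"
proof -
  have "\<bar>x \<bullet> y\<bar> \<le> norm x * norm y" by (rule Cauchy_Schwarz_ineq2)
  also have "\<dots> \<le> norm x ^ 2 + norm y ^ 2"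
    using zero_le_power2[of "norm x - norm y"] mult_nonneg_nonneg[OF norm_ge_zero norm_ge_zero, of x y]
    unfolding power2_diff by linarith
  finally show ?thesis .
qed

lemma measurable_from_borel_pair:
  "f \<in> (borel \<Otimes>\<^sub>M borel) \<rightarrow>\<^sub>M N \<Longrightarrow> f \<in> (borel :: ('a::second_countable_topology \<times> 'b::second_countable_topology) measure) \<rightarrow>\<^sub>M N"
  by (simp add: borel_prod)

section \<open>Projecting couplings to the torus\<close>

lemma tor_proj_measurable [measurable]: "(tor_proj :: real^'n \<Rightarrow> real^'n) \<in> borel_measurable borel"
proof (rule borel_measurable_vec_componentwise)
  fix i :: 'n
  have "(\<lambda>x. tor_proj x $ i) = (\<lambda>x. x $ i - of_int \<lfloor>x $ i\<rfloor>)"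
    by (simp add: fun_eq_iff tor_proj_def frac_def)
  then show "(\<lambda>x. tor_proj x $ i) \<in> borel_measurable borel" by simp
qed

lemma tor_dom_in_borel [measurable]: "tor_dom \<in> sets borel"
proof -
  have "tor_dom = {x \<in> space borel. \<forall>i. 0 \<le> x $ i \<and> x $ i < (1::real)}"
    by (simp add: tor_dom_def)
  also have "\<dots> \<in> sets borel" by measurable
  finally show ?thesis .
qed

lemma tor_proj_in_tor_dom: "tor_proj x \<in> tor_dom"
  by (simp add: tor_proj_def tor_dom_def frac_lt_1)

lemma tor_proj_add_tor_proj: "tor_proj (tor_proj x + v) = tor_proj (x + v)"
  by (simp add: tor_proj_def vec_eq_iff)

lemma tor_prob_distr_tor_proj:
  assumes "prob_space M" "sets M = sets borel"
  shows "tor_prob (distr M borel tor_proj)"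
proof -
  interpret prob_space M by fact
  have tor_proj_M: "tor_proj \<in> M \<rightarrow>\<^sub>M borel" using assms(2) by simp
  have "emeasure (distr M borel tor_proj) tor_dom = emeasure M (tor_proj -` tor_dom \<inter> space M)"
    by (rule emeasure_distr[OF tor_proj_M]) simp
  also have "tor_proj -` tor_dom \<inter> space M = space M" using tor_proj_in_tor_dom by blast
  finally show ?thesis
    unfolding tor_prob_def using prob_space_distr[OF tor_proj_M] emeasure_space_1 by simp
qed

lemma coupling_project_torus:
  fixes \<gamma> :: "((real^'n) \<times> (real^'n)) measure"
  assumes "\<gamma> \<in> Psi_R \<mu> \<nu>"
  shows "distr \<gamma> borel (\<lambda>(x,v). (tor_proj x, v)) \<in> Psi_tor (distr \<mu> borel tor_proj) (distr \<nu> borel tor_proj)"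
proof -
  have "prob_space \<gamma>" and sets_\<gamma>: "sets \<gamma> = sets borel"
    and "integrable \<gamma> (\<lambda>(x,v). norm v ^ 2)"
    and fst_\<gamma>: "distr \<gamma> borel fst = \<mu>" and add_\<gamma>: "distr \<gamma> borel (\<lambda>(x,v). x + v) = \<nu>"
    using assms unfolding Psi_R_def by blast+
  have meas: "f \<in> \<gamma> \<rightarrow>\<^sub>M N" if "f \<in> (borel \<Otimes>\<^sub>M borel) \<rightarrow>\<^sub>M N" for f :: "_ \<Rightarrow> 'b" and N
    using measurable_from_borel_pair[OF that] sets_\<gamma> by simp
  define T :: "(real^'n) \<times> (real^'n) \<Rightarrow> _" where "T = (\<lambda>(x,v). (tor_proj x, v))"
  have T_meas: "T \<in> \<gamma> \<rightarrow>\<^sub>M borel"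
    unfolding T_def measurable_cong_sets[OF sets_\<gamma> refl] borel_prod[symmetric] by measurable
  have "distr (distr \<gamma> borel T) borel fst = distr \<gamma> borel (tor_proj \<circ> fst)"
    by (subst distr_distr[OF _ T_meas]) (auto simp: T_def comp_def case_prod_unfold intro: measurable_from_borel_pair)
  also have "\<dots> = distr \<mu> borel tor_proj"
    by (subst distr_distr[symmetric, of _ borel]) (auto simp: fst_\<gamma> intro!: meas)
  finally have 1: "distr (distr \<gamma> borel T) borel fst = distr \<mu> borel tor_proj" .
  have "distr (distr \<gamma> borel T) borel (\<lambda>(x,v). tor_proj (x + v)) = distr \<gamma> borel (tor_proj \<circ> (\<lambda>(x,v). x + v))"
    by (subst distr_distr[OF _ T_meas])
      (auto simp: T_def comp_def case_prod_unfold tor_proj_add_tor_proj intro: measurable_from_borel_pair)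
  also have "\<dots> = distr \<nu> borel tor_proj"
    by (subst distr_distr[symmetric, of _ borel]) (auto simp: add_\<gamma> intro!: meas)
  finally have 2: "distr (distr \<gamma> borel T) borel (\<lambda>(x,v). tor_proj (x + v)) = distr \<nu> borel tor_proj" .
  have "integrable (distr \<gamma> borel T) (\<lambda>(x,v). norm v ^ 2)"
    using \<open>integrable \<gamma> _\<close> by (subst integrable_distr_eq[OF T_meas])
      (auto simp: T_def case_prod_unfold intro: measurable_from_borel_pair)
  with 1 2 show ?thesis
    unfolding Psi_tor_def T_def[symmetric] using prob_space.prob_space_distr[OF \<open>prob_space \<gamma>\<close> T_meas] by simp
qed

lemma strongly_diff_R_of_strongly_diff_tor:
  fixes \<mu> :: "(real^'n) measure"
  assumes "strongly_diff_tor G (distr \<mu> borel tor_proj)" and "P2 \<mu>"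
  shows "strongly_diff_R (\<lambda>m. G (distr m borel tor_proj)) \<mu>"
proof -
  obtain \<xi> k where \<xi>_meas [measurable]: "\<xi> \<in> borel_measurable borel"
    and \<xi>_L2: "integrable (distr \<mu> borel tor_proj) (\<lambda>x. norm (\<xi> x) ^ 2)" and "k > 0"
    and bound: "\<And>\<nu> \<gamma>. tor_prob \<nu> \<Longrightarrow> \<gamma> \<in> Psi_tor (distr \<mu> borel tor_proj) \<nu> \<Longrightarrow>
      \<bar>G \<nu> - G (distr \<mu> borel tor_proj) - (\<integral>(x,v). \<xi> x \<bullet> v \<partial>\<gamma>)\<bar> \<le> k * (\<integral>(x,v). norm v ^ 2 \<partial>\<gamma>)"
    using assms(1) unfolding strongly_diff_tor_def by blast
  have sets_\<mu>: "sets \<mu> = sets borel" and "prob_space \<mu>" using assms(2) unfolding P2_def by blast+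
  have "integrable \<mu> (\<lambda>x. norm (\<xi> (tor_proj x)) ^ 2)"
    using \<xi>_L2 sets_\<mu> by (subst (asm) integrable_distr_eq) simp_all
  moreover have "\<bar>G (distr \<nu> borel tor_proj) - G (distr \<mu> borel tor_proj) - (\<integral>(x,v). \<xi> (tor_proj x) \<bullet> v \<partial>\<gamma>)\<bar>
      \<le> k * (\<integral>(x,v). norm v ^ 2 \<partial>\<gamma>)" if "P2 \<nu>" and \<gamma>: "\<gamma> \<in> Psi_R \<mu> \<nu>" for \<nu> and \<gamma> :: "((real^'n) \<times> (real^'n)) measure"
  proof -
    have "sets \<gamma> = sets borel" using \<gamma> unfolding Psi_R_def by blast
    then have T_meas: "(\<lambda>(x,v). (tor_proj x, v)) \<in> \<gamma> \<rightarrow>\<^sub>M (borel :: ((real^'n) \<times> (real^'n)) measure)"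
      unfolding measurable_cong_sets[OF _ refl] borel_prod[symmetric] by measurable
    have tor_prob_\<nu>: "tor_prob (distr \<nu> borel tor_proj)"
      using \<open>P2 \<nu>\<close> unfolding P2_def by (blast intro: tor_prob_distr_tor_proj)
    have "(\<integral>(x,v). \<xi> x \<bullet> v \<partial>distr \<gamma> borel (\<lambda>(x,v). (tor_proj x, v))) = (\<integral>(x,v). \<xi> (tor_proj x) \<bullet> v \<partial>\<gamma>)"
      by (subst integral_distr[OF T_meas]) (simp_all add: case_prod_unfold borel_prod[symmetric])
    moreover have "(\<integral>(x,v). norm v ^ 2 \<partial>distr \<gamma> borel (\<lambda>(x,v). (tor_proj x, v))) = (\<integral>(x,v). norm v ^ 2 \<partial>\<gamma>)"
      by (subst integral_distr[OF T_meas]) (simp_all add: case_prod_unfold borel_prod[symmetric])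
    ultimately show ?thesis using bound[OF tor_prob_\<nu> coupling_project_torus[OF \<gamma>]] by simp
  qed
  ultimately show ?thesis
    unfolding strongly_diff_R_def using assms(2) \<open>k > 0\<close> by (intro conjI exI[of _ "\<xi> \<circ> tor_proj"] exI[of _ k]) auto
qed

section \<open>Disintegration over the lattice cells\<close>

definition int_vec :: "('n::finite \<Rightarrow> int) \<Rightarrow> real^'n" where
  "int_vec z = (\<chi> i. of_int (z i))"

definition lattice_cell :: "('n::finite \<Rightarrow> int) \<Rightarrow> (real^'n) set" where
  "lattice_cell z = {x. \<forall>i. \<lfloor>x $ i\<rfloor> = z i}"

lemma lattice_cell_in_borel [measurable]: "lattice_cell z \<in> sets borel"
proof -
  have "lattice_cell z = {x \<in> space borel. \<forall>i. of_int (z i) \<le> x $ i \<and> x $ i < of_int (z i) + (1::real)}"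
    by (auto simp: lattice_cell_def floor_eq_iff)
  also have "\<dots> \<in> sets borel" by measurable
  finally show ?thesis .
qed

lemma tor_proj_add_int_vec: "x \<in> lattice_cell z \<Longrightarrow> tor_proj x + int_vec z = x"
  by (simp add: lattice_cell_def tor_proj_def int_vec_def vec_eq_iff frac_def)

lemma tor_proj_add_int_vec_add: "tor_proj (y + int_vec z + v) = tor_proj (y + v)"
proof -
  have "frac (y $ i + of_int (z i) + v $ i) = frac (y $ i + v $ i)" for i
    using frac_add_of_int_right[of "y $ i + v $ i" "z i"] by (simp add: ac_simps)
  then show ?thesis by (simp add: tor_proj_def int_vec_def vec_eq_iff)
qed

lemma nn_integral_indicator_lattice_cell:
  "(\<integral>\<^sup>+z. indicator (lattice_cell z) x \<partial>count_space UNIV) = (1::ennreal)"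
proof -
  have "indicator (lattice_cell z) x = (indicator {\<lambda>i. \<lfloor>x $ i\<rfloor>} z :: ennreal)" for z
    by (auto simp: lattice_cell_def indicator_def)
  then show ?thesis by simp
qed

locale torus_disintegration = prob_space \<mu> for \<mu> :: "(real^'n) measure" +
  assumes sets_\<mu> [measurable_cong]: "sets \<mu> = sets borel"
begin

abbreviation torus_marginal :: "(real^'n) measure" where
  "torus_marginal \<equiv> distr \<mu> borel tor_proj"

definition cell_marginal :: "('n \<Rightarrow> int) \<Rightarrow> (real^'n) measure" where
  "cell_marginal z = distr (density \<mu> (indicator (lattice_cell z))) borel tor_proj"

definition cell_density :: "('n \<Rightarrow> int) \<Rightarrow> real^'n \<Rightarrow> ennreal" where
  "cell_density z = RN_deriv torus_marginal (cell_marginal z)"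

text \<open>The cell densities sum to 1 only almost everywhere; on the exceptional null set all weight
  goes to cell \<open>0\<close>, so that the weights form a probability on \<open>\<int>\<^sup>d\<close> at every point.\<close>

definition cell_weight :: "('n \<Rightarrow> int) \<Rightarrow> real^'n \<Rightarrow> ennreal" where
  "cell_weight z y =
    (if (\<integral>\<^sup>+z'. cell_density z' y \<partial>count_space UNIV) = 1 then cell_density z y else indicator {\<lambda>_. 0} z)"

definition cond_exp_nn :: "(real^'n \<Rightarrow> ennreal) \<Rightarrow> real^'n \<Rightarrow> ennreal" where
  "cond_exp_nn a y = (\<integral>\<^sup>+z. cell_weight z y * a (y + int_vec z) \<partial>count_space UNIV)"

definition cond_exp :: "(real^'n \<Rightarrow> real^'n) \<Rightarrow> real^'n \<Rightarrow> real^'n" where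
  "cond_exp \<xi> y = (\<integral>z. enn2real (cell_weight z y) *\<^sub>R \<xi> (y + int_vec z) \<partial>count_space UNIV)"

lemma emeasure_torus_marginal:
  "A \<in> sets borel \<Longrightarrow> emeasure torus_marginal A = (\<integral>\<^sup>+x. indicator A (tor_proj x) \<partial>\<mu>)"
  by (rule emeasure_distr_eq_nn_integral) simp_all

lemma cell_marginal_absolutely_continuous: "absolutely_continuous torus_marginal (cell_marginal z)"
  unfolding absolutely_continuous_def
proof
  fix A assume "A \<in> null_sets torus_marginal"
  then have A [measurable]: "A \<in> sets borel" and "emeasure torus_marginal A = 0" by auto
  have "emeasure (cell_marginal z) A = (\<integral>\<^sup>+x. indicator (lattice_cell z) x * indicator A (tor_proj x) \<partial>\<mu>)"
    unfolding cell_marginal_def by (subst emeasure_distr_eq_nn_integral) (simp_all add: nn_integral_density)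
  also have "\<dots> \<le> (\<integral>\<^sup>+x. indicator A (tor_proj x) \<partial>\<mu>)"
    by (intro nn_integral_mono) (auto simp: indicator_def)
  also have "\<dots> = emeasure torus_marginal A" by (simp add: emeasure_torus_marginal)
  finally show "A \<in> null_sets (cell_marginal z)"
    using \<open>emeasure torus_marginal A = 0\<close> by (simp add: cell_marginal_def null_sets_def)
qed

lemma prob_space_torus_marginal: "prob_space torus_marginal"
  by (rule prob_space_distr) simp

lemma density_cell_density: "density torus_marginal (cell_density z) = cell_marginal z"
  unfolding cell_density_def
  by (rule sigma_finite_measure.density_RN_deriv[OF _ cell_marginal_absolutely_continuous])
    (simp_all add: prob_space_imp_sigma_finite prob_space_torus_marginal cell_marginal_def)

lemma cell_density_measurable [measurable]: "cell_density z \<in> borel_measurable borel"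
  using borel_measurable_RN_deriv[of torus_marginal "cell_marginal z"] by (simp add: cell_density_def)

lemma nn_integral_cell_density:
  assumes [measurable]: "\<phi> \<in> borel_measurable borel"
  shows "(\<integral>\<^sup>+y. cell_density z y * \<phi> y \<partial>torus_marginal)
    = (\<integral>\<^sup>+x. indicator (lattice_cell z) x * \<phi> (tor_proj x) \<partial>\<mu>)"
proof -
  have "(\<integral>\<^sup>+y. cell_density z y * \<phi> y \<partial>torus_marginal) = integral\<^sup>N (cell_marginal z) \<phi>"
    by (simp add: density_cell_density[symmetric] nn_integral_density)
  also have "\<dots> = (\<integral>\<^sup>+x. \<phi> (tor_proj x) \<partial>density \<mu> (indicator (lattice_cell z)))"
    unfolding cell_marginal_def by (simp add: nn_integral_distr)
  finally show ?thesis by (simp add: nn_integral_density)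
qed

lemma nn_integral_sum_cell_density:
  assumes [measurable]: "g \<in> borel_measurable borel" "h \<in> borel_measurable borel"
  shows "(\<integral>\<^sup>+y. (\<integral>\<^sup>+z. cell_density z y * g (y + int_vec z) \<partial>count_space UNIV) * h y \<partial>torus_marginal)
    = (\<integral>\<^sup>+x. g x * h (tor_proj x) \<partial>\<mu>)"
proof -
  have "(\<integral>\<^sup>+y. (\<integral>\<^sup>+z. cell_density z y * g (y + int_vec z) \<partial>count_space UNIV) * h y \<partial>torus_marginal)
      = (\<integral>\<^sup>+z. \<integral>\<^sup>+y. cell_density z y * (g (y + int_vec z) * h y) \<partial>torus_marginal \<partial>count_space UNIV)"
    by (simp add: nn_integral_multc[symmetric] mult.assoc nn_integral_count_space_nn_integral)
  also have "\<dots> = (\<integral>\<^sup>+z. \<integral>\<^sup>+x. indicator (lattice_cell z) x * (g x * h (tor_proj x)) \<partial>\<mu> \<partial>count_space UNIV)"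
    by (simp add: nn_integral_cell_density, intro nn_integral_cong)
      (simp add: indicator_def tor_proj_add_int_vec)
  also have "\<dots> = (\<integral>\<^sup>+x. g x * h (tor_proj x) \<partial>\<mu>)"
    by (simp add: nn_integral_count_space_nn_integral[symmetric] nn_integral_multc
        nn_integral_indicator_lattice_cell)
  finally show ?thesis .
qed

lemma AE_sum_cell_density: "AE y in torus_marginal. (\<integral>\<^sup>+z. cell_density z y \<partial>count_space UNIV) = 1"
proof -
  have "AE y in torus_marginal. (\<integral>\<^sup>+z. cell_density z y \<partial>count_space UNIV) = (\<lambda>_. 1) y"
  proof (rule sigma_finite_measure.density_unique2)
    fix A assume "A \<in> sets torus_marginal"
    then have [measurable]: "A \<in> sets borel" by simp
    show "(\<integral>\<^sup>+y. (\<integral>\<^sup>+z. cell_density z y \<partial>count_space UNIV) * indicator A y \<partial>torus_marginal)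
        = (\<integral>\<^sup>+y. 1 * indicator A y \<partial>torus_marginal)"
      using nn_integral_sum_cell_density[of "\<lambda>_. 1" "indicator A"] by (simp add: emeasure_torus_marginal)
  qed (simp_all add: prob_space_imp_sigma_finite prob_space_torus_marginal borel_measurable_nn_integral_count_space)
  then show ?thesis by simp
qed

lemma cell_weight_measurable [measurable]: "cell_weight z \<in> borel_measurable borel"
proof -
  have [measurable]: "(\<lambda>y. \<integral>\<^sup>+z. cell_density z y \<partial>count_space UNIV) \<in> borel_measurable borel"
    by (simp add: borel_measurable_nn_integral_count_space)
  show ?thesis unfolding cell_weight_def by measurable
qed

lemma nn_integral_cell_weight: "(\<integral>\<^sup>+z. cell_weight z y \<partial>count_space UNIV) = 1"
  by (cases "(\<integral>\<^sup>+z. cell_density z y \<partial>count_space UNIV) = 1") (simp_all add: cell_weight_def)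

lemma AE_cell_weight_eq_cell_density: "AE y in torus_marginal. \<forall>z. cell_weight z y = cell_density z y"
  using AE_sum_cell_density by eventually_elim (simp add: cell_weight_def)

lemma cell_weight_le_1: "cell_weight z y \<le> 1"
proof -
  have "cell_weight z y = (\<integral>\<^sup>+z'. cell_weight z' y * indicator {z} z' \<partial>count_space UNIV)" by simp
  also have "\<dots> \<le> (\<integral>\<^sup>+z'. cell_weight z' y \<partial>count_space UNIV)"
    by (intro nn_integral_mono) (simp add: indicator_def)
  finally show ?thesis by (simp add: nn_integral_cell_weight)
qed

lemma ennreal_enn2real_cell_weight [simp]: "ennreal (enn2real (cell_weight z y)) = cell_weight z y"
  using le_less_trans[OF cell_weight_le_1 ennreal_one_less_top] by simp

lemma cond_exp_nn_measurable [measurable]: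
  "a \<in> borel_measurable borel \<Longrightarrow> cond_exp_nn a \<in> borel_measurable borel"
  unfolding cond_exp_nn_def by (rule borel_measurable_nn_integral_count_space) simp

lemma nn_integral_cond_exp_nn:
  assumes [measurable]: "g \<in> borel_measurable borel" "h \<in> borel_measurable borel"
  shows "(\<integral>\<^sup>+y. cond_exp_nn g y * h y \<partial>torus_marginal) = (\<integral>\<^sup>+x. g x * h (tor_proj x) \<partial>\<mu>)"
proof -
  have "(\<integral>\<^sup>+y. cond_exp_nn g y * h y \<partial>torus_marginal)
      = (\<integral>\<^sup>+y. (\<integral>\<^sup>+z. cell_density z y * g (y + int_vec z) \<partial>count_space UNIV) * h y \<partial>torus_marginal)"
    by (intro nn_integral_cong_AE, use AE_cell_weight_eq_cell_density in eventually_elim)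
      (simp add: cond_exp_nn_def)
  also have "\<dots> = (\<integral>\<^sup>+x. g x * h (tor_proj x) \<partial>\<mu>)" by (rule nn_integral_sum_cell_density) simp_all
  finally show ?thesis .
qed

lemma cond_exp_measurable [measurable]:
  "\<xi> \<in> borel_measurable borel \<Longrightarrow> cond_exp \<xi> \<in> borel_measurable borel"
  unfolding cond_exp_def by (rule borel_measurable_integral_count_space) simp

lemma norm_cond_exp_le: "ennreal (norm (cond_exp \<xi> y)) \<le> cond_exp_nn (\<lambda>x. ennreal (norm (\<xi> x))) y"
proof (cases "integrable (count_space UNIV) (\<lambda>z. enn2real (cell_weight z y) *\<^sub>R \<xi> (y + int_vec z))")
  case True
  then have "ennreal (norm (cond_exp \<xi> y))
      \<le> (\<integral>\<^sup>+z. ennreal (norm (enn2real (cell_weight z y) *\<^sub>R \<xi> (y + int_vec z))) \<partial>count_space UNIV)"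
    unfolding cond_exp_def by (rule integral_norm_bound_ennreal)
  then show ?thesis by (simp add: cond_exp_nn_def ennreal_mult)
qed (simp add: cond_exp_def not_integrable_integral_eq)

lemma AE_integrable_cell_weighted:
  fixes \<xi> :: "real^'n \<Rightarrow> real^'n"
  assumes [measurable]: "\<xi> \<in> borel_measurable borel" and "integrable \<mu> (\<lambda>x. norm (\<xi> x) ^ 2)"
  shows "AE y in torus_marginal.
    integrable (count_space UNIV) (\<lambda>z. enn2real (cell_weight z y) *\<^sub>R \<xi> (y + int_vec z))"
proof -
  have "integrable \<mu> (\<lambda>x. norm (\<xi> x))"
    by (rule square_integrable_imp_integrable) (simp_all add: assms)
  then have "(\<integral>\<^sup>+y. cond_exp_nn (\<lambda>x. ennreal (norm (\<xi> x))) y * 1 \<partial>torus_marginal) \<noteq> \<infinity>"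
    by (subst nn_integral_cond_exp_nn) auto
  then have "AE y in torus_marginal. cond_exp_nn (\<lambda>x. ennreal (norm (\<xi> x))) y \<noteq> \<infinity>"
    by (intro nn_integral_noteq_infinite) simp_all
  then show ?thesis
  proof eventually_elim
    case (elim y)
    show ?case
    proof (rule integrableI_bounded)
      show "(\<integral>\<^sup>+z. ennreal (norm (enn2real (cell_weight z y) *\<^sub>R \<xi> (y + int_vec z))) \<partial>count_space UNIV) < \<infinity>"
        using elim by (simp add: cond_exp_nn_def ennreal_mult top.not_eq_extremum)
    qed simp
  qed
qed

lemma cond_exp_square_integrable:
  assumes [measurable]: "\<xi> \<in> borel_measurable borel" and "integrable \<mu> (\<lambda>x. norm (\<xi> x) ^ 2)"
  shows "integrable torus_marginal (\<lambda>y. norm (cond_exp \<xi> y) ^ 2)"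
proof (rule integrableI_bounded)
  have "ennreal (norm (norm (cond_exp \<xi> y) ^ 2)) \<le> cond_exp_nn (\<lambda>x. ennreal (norm (\<xi> x)) ^ 2) y" for y
  proof -
    have "ennreal (norm (norm (cond_exp \<xi> y) ^ 2)) = ennreal (norm (cond_exp \<xi> y)) ^ 2"
      by (simp add: ennreal_power)
    also have "\<dots> \<le> cond_exp_nn (\<lambda>x. ennreal (norm (\<xi> x))) y ^ 2"
      by (intro power_mono norm_cond_exp_le) simp
    also have "\<dots> \<le> cond_exp_nn (\<lambda>x. ennreal (norm (\<xi> x)) ^ 2) y"
      unfolding cond_exp_nn_def
      by (rule nn_integral_weighted_square_le[where w="\<lambda>z. cell_weight z y"
            and a="\<lambda>z. ennreal (norm (\<xi> (y + int_vec z)))"])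
        (simp_all add: nn_integral_cell_weight)
    finally show ?thesis .
  qed
  then have "(\<integral>\<^sup>+y. ennreal (norm (norm (cond_exp \<xi> y) ^ 2)) \<partial>torus_marginal)
      \<le> (\<integral>\<^sup>+y. cond_exp_nn (\<lambda>x. ennreal (norm (\<xi> x)) ^ 2) y * 1 \<partial>torus_marginal)"
    by (intro nn_integral_mono) simp
  also have "\<dots> = (\<integral>\<^sup>+x. ennreal (norm (\<xi> x)) ^ 2 * 1 \<partial>\<mu>)"
    by (rule nn_integral_cond_exp_nn) simp_all
  also have "\<dots> < \<infinity>"
    using integrableD(2)[OF assms(2)] by (simp add: ennreal_power top.not_eq_extremum)
  finally show "(\<integral>\<^sup>+y. ennreal (norm (norm (cond_exp \<xi> y) ^ 2)) \<partial>torus_marginal) < \<infinity>" .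
qed simp

end

section \<open>Lifting couplings from the torus\<close>

locale torus_coupling_lift = torus_disintegration \<mu> for \<mu> :: "(real^'n) measure" +
  fixes \<gamma> :: "((real^'n) \<times> (real^'n)) measure"
  assumes prob_space_\<gamma>: "prob_space \<gamma>" and sets_\<gamma>: "sets \<gamma> = sets borel"
    and distr_\<gamma>_fst: "distr \<gamma> borel fst = torus_marginal"
begin

lemma sets_\<gamma>_pair [measurable_cong]: "sets \<gamma> = sets (borel \<Otimes>\<^sub>M borel)"
  by (simp only: sets_\<gamma> borel_prod)

lemma measurable_count_space_pair_\<gamma>:
  assumes "\<And>z. (\<lambda>w. f (z, w)) \<in> \<gamma> \<rightarrow>\<^sub>M K"
  shows "f \<in> (count_space (UNIV :: ('n \<Rightarrow> int) set) \<Otimes>\<^sub>M \<gamma>) \<rightarrow>\<^sub>M K"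
  using assms by (intro measurable_pair_measure_countable1) simp_all

lemma pair_sigma_finite_count_space_\<gamma>: "pair_sigma_finite (count_space (UNIV :: ('n \<Rightarrow> int) set)) \<gamma>"
  by (intro pair_sigma_finite.intro sigma_finite_measure_count_space_countable countableI_type
      prob_space_imp_sigma_finite prob_space_\<gamma>)

definition lifted_coupling :: "((real^'n) \<times> (real^'n)) measure" where
  "lifted_coupling = distr (density (count_space UNIV \<Otimes>\<^sub>M \<gamma>) (\<lambda>(z,w). cell_weight z (fst w)))
    (borel \<Otimes>\<^sub>M borel) (\<lambda>(z,w). (fst w + int_vec z, snd w))"

lemma sets_lifted_coupling [measurable_cong]: "sets lifted_coupling = sets (borel \<Otimes>\<^sub>M borel)"
  by (simp add: lifted_coupling_def)

lemma nn_integral_lifted_coupling: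
  assumes [measurable]: "g \<in> borel_measurable (borel \<Otimes>\<^sub>M borel)"
  shows "integral\<^sup>N lifted_coupling g
    = (\<integral>\<^sup>+w. \<integral>\<^sup>+z. cell_weight z (fst w) * g (fst w + int_vec z, snd w) \<partial>count_space UNIV \<partial>\<gamma>)"
proof -
  have [measurable]: "(\<lambda>(z,w). (fst w + int_vec z, snd w)) \<in> count_space UNIV \<Otimes>\<^sub>M \<gamma> \<rightarrow>\<^sub>M borel \<Otimes>\<^sub>M borel"
    "(\<lambda>(z,w). cell_weight z (fst w)) \<in> borel_measurable (count_space UNIV \<Otimes>\<^sub>M \<gamma>)"
    "(\<lambda>(z,w). cell_weight z (fst w) * g (fst w + int_vec z, snd w)) \<in> borel_measurable (count_space UNIV \<Otimes>\<^sub>M \<gamma>)"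
    by (auto intro!: measurable_count_space_pair_\<gamma>)
  show ?thesis
    unfolding lifted_coupling_def
    by (simp add: nn_integral_distr nn_integral_density case_prod_unfold
        pair_sigma_finite.nn_integral_snd[OF pair_sigma_finite_count_space_\<gamma>, symmetric])
qed

lemma nn_integral_lifted_coupling_fst:
  assumes [measurable]: "a \<in> borel_measurable borel"
  shows "(\<integral>\<^sup>+p. a (fst p) \<partial>lifted_coupling) = (\<integral>\<^sup>+x. a x \<partial>\<mu>)"
proof -
  have "(\<integral>\<^sup>+p. a (fst p) \<partial>lifted_coupling) = (\<integral>\<^sup>+w. cond_exp_nn a (fst w) \<partial>\<gamma>)"
    by (simp add: nn_integral_lifted_coupling cond_exp_nn_def)
  also have "\<dots> = (\<integral>\<^sup>+y. cond_exp_nn a y * 1 \<partial>torus_marginal)"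
    by (simp add: distr_\<gamma>_fst[symmetric] nn_integral_distr)
  also have "\<dots> = (\<integral>\<^sup>+x. a x \<partial>\<mu>)"
    using nn_integral_cond_exp_nn[of a "\<lambda>_. 1"] by simp
  finally show ?thesis .
qed

lemma nn_integral_lifted_coupling_invariant:
  assumes "g \<in> borel_measurable (borel \<Otimes>\<^sub>M borel)" and "\<And>y z v. g (y + int_vec z, v) = g (y, v)"
  shows "integral\<^sup>N lifted_coupling g = integral\<^sup>N \<gamma> g"
  using assms by (simp add: nn_integral_lifted_coupling nn_integral_multc nn_integral_cell_weight)

lemma prob_space_lifted_coupling: "prob_space lifted_coupling"
proof (rule prob_spaceI)
  have "emeasure lifted_coupling (space lifted_coupling) = (\<integral>\<^sup>+p. 1 \<partial>lifted_coupling)" by simp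
  also have "\<dots> = (\<integral>\<^sup>+p. 1 \<partial>\<gamma>)" by (rule nn_integral_lifted_coupling_invariant) simp_all
  finally show "emeasure lifted_coupling (space lifted_coupling) = 1"
    using prob_space.emeasure_space_1[OF prob_space_\<gamma>] by simp
qed

lemma distr_lifted_coupling_fst: "distr lifted_coupling borel fst = \<mu>"
proof (rule measure_eqI)
  fix A assume "A \<in> sets (distr lifted_coupling borel fst)"
  then have [measurable]: "A \<in> sets borel" by simp
  have "emeasure (distr lifted_coupling borel fst) A = (\<integral>\<^sup>+p. indicator A (fst p) \<partial>lifted_coupling)"
    by (simp add: emeasure_distr_eq_nn_integral)
  also have "\<dots> = emeasure \<mu> A" by (simp add: nn_integral_lifted_coupling_fst)
  finally show "emeasure (distr lifted_coupling borel fst) A = emeasure \<mu> A" .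
qed (simp add: sets_\<mu>)

lemma distr_lifted_coupling_invariant:
  assumes [measurable]: "f \<in> borel \<Otimes>\<^sub>M borel \<rightarrow>\<^sub>M N" and "\<And>y z v. f (y + int_vec z, v) = f (y, v)"
  shows "distr lifted_coupling N f = distr \<gamma> N f"
proof (rule measure_eqI)
  fix A assume "A \<in> sets (distr lifted_coupling N f)"
  then have [measurable]: "A \<in> sets N" by simp
  have "emeasure (distr lifted_coupling N f) A = (\<integral>\<^sup>+p. indicator A (f p) \<partial>lifted_coupling)"
    by (simp add: emeasure_distr_eq_nn_integral)
  also have "\<dots> = (\<integral>\<^sup>+p. indicator A (f p) \<partial>\<gamma>)"
    by (rule nn_integral_lifted_coupling_invariant) (simp_all add: assms(2))
  also have "\<dots> = emeasure (distr \<gamma> N f) A"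
    by (simp add: emeasure_distr_eq_nn_integral)
  finally show "emeasure (distr lifted_coupling N f) A = emeasure (distr \<gamma> N f) A" .
qed simp

lemma integrable_lifted_coupling:
  fixes f :: "(real^'n) \<times> (real^'n) \<Rightarrow> 'b::{banach, second_countable_topology}"
  assumes [measurable]: "f \<in> borel_measurable (borel \<Otimes>\<^sub>M borel)"
    "a \<in> borel_measurable borel" "b \<in> borel_measurable borel"
    and "integrable \<mu> a" "integrable \<gamma> (\<lambda>p. b (snd p))"
    and "\<And>x. 0 \<le> a x" "\<And>v. 0 \<le> b v" and "\<And>x v. norm (f (x, v)) \<le> a x + b v"
  shows "integrable lifted_coupling f"
proof (rule integrableI_bounded)
  have "(\<integral>\<^sup>+p. ennreal (norm (f p)) \<partial>lifted_coupling)
      \<le> (\<integral>\<^sup>+p. ennreal (a (fst p)) + ennreal (b (snd p)) \<partial>lifted_coupling)"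
  proof (intro nn_integral_mono)
    fix p :: "(real^'n) \<times> (real^'n)"
    have "ennreal (norm (f p)) \<le> ennreal (a (fst p) + b (snd p))"
      using assms(8)[of "fst p" "snd p"] by (intro ennreal_leI) simp
    then show "ennreal (norm (f p)) \<le> ennreal (a (fst p)) + ennreal (b (snd p))"
      using assms(6,7) by simp
  qed
  also have "\<dots> = (\<integral>\<^sup>+p. ennreal (a (fst p)) \<partial>lifted_coupling) + (\<integral>\<^sup>+p. ennreal (b (snd p)) \<partial>lifted_coupling)"
    by (rule nn_integral_add) simp_all
  also have "\<dots> = (\<integral>\<^sup>+x. ennreal (a x) \<partial>\<mu>) + (\<integral>\<^sup>+p. ennreal (b (snd p)) \<partial>\<gamma>)"
    by (simp add: nn_integral_lifted_coupling_fst[of "\<lambda>x. ennreal (a x)"] nn_integral_lifted_coupling_invariant[of "\<lambda>p. ennreal (b (snd p))"])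
  also have "\<dots> < \<infinity>"
    using integrableD(2)[OF assms(4)] integrableD(2)[OF assms(5)] assms(6,7)
    by (simp add: top.not_eq_extremum)
  finally show "(\<integral>\<^sup>+p. ennreal (norm (f p)) \<partial>lifted_coupling) < \<infinity>" .
qed simp

lemma integral_lifted_coupling_invariant:
  assumes [measurable]: "g \<in> borel_measurable (borel \<Otimes>\<^sub>M borel)"
    and "\<And>y z v. g (y + int_vec z, v) = g (y, v)"
  shows "integral\<^sup>L lifted_coupling g = (integral\<^sup>L \<gamma> g :: real)"
proof -
  have "integral\<^sup>L lifted_coupling g = (\<integral>t. t \<partial>distr lifted_coupling borel g)"
    by (simp add: integral_distr)
  also have "\<dots> = (\<integral>t. t \<partial>distr \<gamma> borel g)"
    by (simp add: distr_lifted_coupling_invariant assms(2))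
  finally show ?thesis by (simp add: integral_distr)
qed

lemma integral_lifted_coupling:
  fixes f :: "(real^'n) \<times> (real^'n) \<Rightarrow> 'b::{banach, second_countable_topology}"
  assumes [measurable]: "f \<in> borel_measurable (borel \<Otimes>\<^sub>M borel)" and "integrable lifted_coupling f"
  shows "integral\<^sup>L lifted_coupling f = (\<integral>w. (\<integral>z. enn2real (cell_weight z (fst w)) *\<^sub>R
      f (fst w + int_vec z, snd w) \<partial>count_space UNIV) \<partial>\<gamma>)"
proof -
  define L :: "('n \<Rightarrow> int) \<times> (real^'n) \<times> (real^'n) \<Rightarrow> _" where "L = (\<lambda>(z,w). (fst w + int_vec z, snd w))"
  define R :: "('n \<Rightarrow> int) \<times> (real^'n) \<times> (real^'n) \<Rightarrow> real" where "R = (\<lambda>(z,w). enn2real (cell_weight z (fst w)))"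
  have [measurable]: "L \<in> count_space UNIV \<Otimes>\<^sub>M \<gamma> \<rightarrow>\<^sub>M borel \<Otimes>\<^sub>M borel"
    "R \<in> borel_measurable (count_space UNIV \<Otimes>\<^sub>M \<gamma>)"
    by (auto simp: L_def R_def intro!: measurable_count_space_pair_\<gamma>)
  have lifted: "lifted_coupling = distr (density (count_space UNIV \<Otimes>\<^sub>M \<gamma>) (\<lambda>p. ennreal (R p))) (borel \<Otimes>\<^sub>M borel) L"
    by (simp add: lifted_coupling_def L_def R_def case_prod_unfold)
  have R_nonneg: "AE p in count_space UNIV \<Otimes>\<^sub>M \<gamma>. 0 \<le> R p" by (simp add: R_def case_prod_unfold)
  have "integrable (density (count_space UNIV \<Otimes>\<^sub>M \<gamma>) (\<lambda>p. ennreal (R p))) (\<lambda>p. f (L p))"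
    using assms(2) unfolding lifted by (subst (asm) integrable_distr_eq) simp_all
  then have "integrable (count_space UNIV \<Otimes>\<^sub>M \<gamma>) (\<lambda>(z,w). R (z,w) *\<^sub>R f (L (z,w)))"
    by (subst (asm) integrable_density[OF _ _ R_nonneg]) (simp_all add: case_prod_unfold)
  note Fubini = pair_sigma_finite.integral_snd[OF pair_sigma_finite_count_space_\<gamma> this]
  have "integral\<^sup>L lifted_coupling f = (\<integral>p. f (L p) \<partial>density (count_space UNIV \<Otimes>\<^sub>M \<gamma>) (\<lambda>p. ennreal (R p)))"
    unfolding lifted by (rule integral_distr) simp_all
  also have "\<dots> = (\<integral>(z,w). R (z,w) *\<^sub>R f (L (z,w)) \<partial>(count_space UNIV \<Otimes>\<^sub>M \<gamma>))"
    by (subst integral_density[OF _ _ R_nonneg]) (simp_all add: case_prod_unfold)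
  also note Fubini[symmetric]
  finally show ?thesis by (simp add: R_def L_def)
qed

lemma integral_lifted_coupling_inner:
  fixes \<xi> :: "real^'n \<Rightarrow> real^'n"
  assumes [measurable]: "\<xi> \<in> borel_measurable borel" and \<xi>_L2: "integrable \<mu> (\<lambda>x. norm (\<xi> x) ^ 2)"
    and "integrable \<gamma> (\<lambda>(x,v). norm v ^ 2)"
  shows "(\<integral>(x,v). \<xi> x \<bullet> v \<partial>lifted_coupling) = (\<integral>(x,v). cond_exp \<xi> x \<bullet> v \<partial>\<gamma>)"
proof -
  have "integrable lifted_coupling (\<lambda>(x,v). \<xi> x \<bullet> v)"
    by (rule integrable_lifted_coupling[where a="\<lambda>x. norm (\<xi> x) ^ 2" and b="\<lambda>v. norm v ^ 2"])
      (use assms in \<open>simp_all add: abs_inner_le_power2 case_prod_unfold\<close>)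
  then have "(\<integral>(x,v). \<xi> x \<bullet> v \<partial>lifted_coupling) = (\<integral>w. (\<integral>z. enn2real (cell_weight z (fst w)) *\<^sub>R
      (\<xi> (fst w + int_vec z) \<bullet> snd w) \<partial>count_space UNIV) \<partial>\<gamma>)"
    by (subst integral_lifted_coupling) simp_all
  also have "\<dots> = (\<integral>w. cond_exp \<xi> (fst w) \<bullet> snd w \<partial>\<gamma>)"
  proof (rule integral_cong_AE)
    have "AE y in distr \<gamma> borel fst.
        integrable (count_space UNIV) (\<lambda>z. enn2real (cell_weight z y) *\<^sub>R \<xi> (y + int_vec z))"
      unfolding distr_\<gamma>_fst using AE_integrable_cell_weighted[OF _ \<xi>_L2] by simp
    then have "AE w in \<gamma>. integrable (count_space UNIV)
        (\<lambda>z. enn2real (cell_weight z (fst w)) *\<^sub>R \<xi> (fst w + int_vec z))"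
      by (rule AE_distrD[rotated]) simp
    then show "AE w in \<gamma>. (\<integral>z. enn2real (cell_weight z (fst w)) *\<^sub>R (\<xi> (fst w + int_vec z) \<bullet> snd w)
        \<partial>count_space UNIV) = cond_exp \<xi> (fst w) \<bullet> snd w"
    proof eventually_elim
      case (elim w)
      have "cond_exp \<xi> (fst w) \<bullet> snd w = (\<integral>z. (enn2real (cell_weight z (fst w)) *\<^sub>R \<xi> (fst w + int_vec z))
          \<bullet> snd w \<partial>count_space UNIV)"
        unfolding cond_exp_def by (rule integral_inner_left[symmetric]) (rule elim)
      then show ?case by simp
    qed
  qed (simp_all add: borel_measurable_integral_count_space)
  finally show ?thesis by (simp add: case_prod_unfold)
qed

lemma distr_lifted_coupling_add_tor_proj:
  "distr (distr lifted_coupling borel (\<lambda>(x,v). x + v)) borel tor_proj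
    = distr \<gamma> borel (\<lambda>(x,v). tor_proj (x + v))"
proof -
  have "distr (distr lifted_coupling borel (\<lambda>(x,v). x + v)) borel tor_proj
      = distr lifted_coupling borel (\<lambda>(x,v). tor_proj (x + v))"
    by (subst distr_distr) (simp_all add: comp_def case_prod_unfold)
  also have "\<dots> = distr \<gamma> borel (\<lambda>(x,v). tor_proj (x + v))"
    by (rule distr_lifted_coupling_invariant) (simp_all add: tor_proj_add_int_vec_add)
  finally show ?thesis .
qed

lemma lifted_coupling_in_Psi_R:
  assumes "integrable \<gamma> (\<lambda>(x,v). norm v ^ 2)"
  shows "lifted_coupling \<in> Psi_R \<mu> (distr lifted_coupling borel (\<lambda>(x,v). x + v))"
proof -
  have "integrable lifted_coupling (\<lambda>(x,v). norm v ^ 2)"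
    by (rule integrable_lifted_coupling[where a="\<lambda>_. 0" and b="\<lambda>v. norm v ^ 2"])
      (use assms in \<open>simp_all add: case_prod_unfold\<close>)
  moreover have "sets lifted_coupling = sets borel"
    by (simp only: sets_lifted_coupling borel_prod)
  ultimately show ?thesis
    unfolding Psi_R_def using prob_space_lifted_coupling distr_lifted_coupling_fst by simp
qed

lemma P2_lifted_coupling_add:
  assumes "integrable \<mu> (\<lambda>x. norm x ^ 2)" and "integrable \<gamma> (\<lambda>(x,v). norm v ^ 2)"
  shows "P2 (distr lifted_coupling borel (\<lambda>(x,v). x + v))"
proof -
  have "integrable lifted_coupling (\<lambda>(x,v). norm (x + v) ^ 2)"
    by (rule integrable_lifted_coupling[where a="\<lambda>x. 2 * norm x ^ 2" and b="\<lambda>v. 2 * norm v ^ 2"])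
      (use assms in \<open>simp_all add: norm_add_power2_le case_prod_unfold\<close>)
  then show ?thesis
    unfolding P2_def
    by (simp add: prob_space.prob_space_distr prob_space_lifted_coupling integrable_distr_eq case_prod_unfold)
qed

end

context torus_disintegration
begin

lemma strongly_diff_tor_of_strongly_diff_R:
  assumes "strongly_diff_R (\<lambda>m. G (distr m borel tor_proj)) \<mu>"
  shows "strongly_diff_tor G torus_marginal"
proof -
  obtain \<xi> k where \<xi>_meas [measurable]: "\<xi> \<in> borel_measurable borel"
    and \<xi>_L2: "integrable \<mu> (\<lambda>x. norm (\<xi> x) ^ 2)" and "k > 0"
    and bound: "\<And>\<nu> \<gamma>. P2 \<nu> \<Longrightarrow> \<gamma> \<in> Psi_R \<mu> \<nu> \<Longrightarrow>
      \<bar>G (distr \<nu> borel tor_proj) - G torus_marginal - (\<integral>(x,v). \<xi> x \<bullet> v \<partial>\<gamma>)\<bar> \<le> k * (\<integral>(x,v). norm v ^ 2 \<partial>\<gamma>)"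
    using assms unfolding strongly_diff_R_def by blast
  have "\<bar>G \<nu> - G torus_marginal - (\<integral>(x,v). cond_exp \<xi> x \<bullet> v \<partial>\<gamma>)\<bar> \<le> k * (\<integral>(x,v). norm v ^ 2 \<partial>\<gamma>)"
    if "\<gamma> \<in> Psi_tor torus_marginal \<nu>" for \<nu> \<gamma>
  proof -
    have "prob_space \<gamma>" "sets \<gamma> = sets borel" "distr \<gamma> borel fst = torus_marginal"
      and \<gamma>_L2: "integrable \<gamma> (\<lambda>(x,v). norm v ^ 2)"
      and \<gamma>_target: "distr \<gamma> borel (\<lambda>(x,v). tor_proj (x + v)) = \<nu>"
      using that unfolding Psi_tor_def by blast+
    then interpret torus_coupling_lift \<mu> \<gamma>
      by (intro torus_coupling_lift.intro torus_coupling_lift_axioms.intro torus_disintegration.intro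
          torus_disintegration_axioms prob_space_axioms)
    have "distr (distr lifted_coupling borel (\<lambda>(x,v). x + v)) borel tor_proj = \<nu>"
      by (simp add: distr_lifted_coupling_add_tor_proj \<gamma>_target)
    moreover have "integrable \<mu> (\<lambda>x. norm x ^ 2)" using assms by (simp add: strongly_diff_R_def P2_def)
    ultimately show ?thesis
      using bound[OF P2_lifted_coupling_add lifted_coupling_in_Psi_R] \<gamma>_L2
      by (simp add: integral_lifted_coupling_inner[OF \<xi>_meas \<xi>_L2 \<gamma>_L2] integral_lifted_coupling_invariant)
  qed
  then show ?thesis
    unfolding strongly_diff_tor_def using \<xi>_L2 \<open>k > 0\<close>
    by (intro conjI exI[of _ "cond_exp \<xi>"] exI[of _ k])
      (simp_all add: tor_prob_distr_tor_proj cond_exp_square_integrable prob_space_axioms sets_\<mu>)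
qed

end

theorem lemma1p2:
  fixes G :: "(real^'n) measure \<Rightarrow> real"
  shows "(\<forall>\<mu>t. strongly_diff_tor G \<mu>t \<longrightarrow>
            (\<forall>\<mu>. P2 \<mu> \<and> distr \<mu> borel tor_proj = \<mu>t \<longrightarrow>
                 strongly_diff_R (\<lambda>m. G (distr m borel tor_proj)) \<mu>))
       \<and> (\<forall>\<mu>. P2 \<mu> \<and> strongly_diff_R (\<lambda>m. G (distr m borel tor_proj)) \<mu> \<longrightarrow>
                 strongly_diff_tor G (distr \<mu> borel tor_proj))"
proof (intro conjI allI impI; elim conjE)
  fix \<mu> :: "(real^'n) measure"
  assume "P2 \<mu>" and diff: "strongly_diff_R (\<lambda>m. G (distr m borel tor_proj)) \<mu>"
  from \<open>P2 \<mu>\<close> interpret torus_disintegration \<mu>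
    by (intro torus_disintegration.intro torus_disintegration_axioms.intro) (simp_all add: P2_def)
  show "strongly_diff_tor G (distr \<mu> borel tor_proj)"
    by (rule strongly_diff_tor_of_strongly_diff_R[OF diff])
qed (auto intro: strongly_diff_R_of_strongly_diff_tor)

end
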